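(* Let $a>0$, $b>0$, let $p\in\mathbb{N}$, and let $\alpha,\beta,t$ be real numbers with $\alpha+\beta t>1$. Then \[ a\gamma + b\ln p + a\psi(\alpha+\beta t) - b\psi_p(\alpha+\beta t) > 0 . \]
   Context: $\gamma$ denotes the Euler–Mascheroni constant and $\psi(t)=\Gamma'(t)/\Gamma(t)$ is the digamma function for $t>0$, where $\Gamma$ is Euler's Gamma function. For $p\in\mathbb{N}$ and $t>0$, the $p$-Gamma function is $\Gamma_p(t)=\frac{p!\,p^t}{t(t+1)\cdots(t+p)}$, and $\psi_p(t)=\frac{d}{dt}\ln\Gamma_p(t)=\Gamma_p'(t)/\Gamma_p(t)$. *)

theory Defs
  imports "HOL-Analysis.Analysis"
begin

definition Gamma_p :: "nat \<Rightarrow> real \<Rightarrow> real" where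
  "Gamma_p p t = fact p * real p powr t / (\<Prod>k = 0..p. (t + real k))"

definition psi_p :: "nat \<Rightarrow> real \<Rightarrow> real" where
  "psi_p p t = deriv (\<lambda>s. ln (Gamma_p p s)) t"

end

theory Submission
  imports Defs
begin

text \<open>Taking logarithms, \<open>\<psi>\<^sub>p(x) = ln p - \<Sum>\<^sub>k\<^sub>=\<^sub>0\<^sup>p 1/(x+k)\<close>, so the \<open>b\<close>-terms of the
  expression add up to \<open>b \<Sum>\<^sub>k 1/(x+k) > 0\<close>. The \<open>a\<close>-terms give \<open>a (\<gamma> + \<psi>(x))\<close>, which is
  positive for \<open>x > 1\<close> because \<open>\<psi>\<close> is strictly increasing and \<open>\<psi>(1) = -\<gamma>\<close>.\<close>

lemma ln_Gamma_p:
  assumes "p \<ge> 1" "s > (0::real)"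
  shows "ln (Gamma_p p s) = ln (fact p) + s * ln (real p) - (\<Sum>k=0..p. ln (s + real k))"
proof -
  have pos: "s + real k > 0" for k
    using assms(2) by simp
  have prod_pos: "(\<Prod>k = 0..p. (s + real k)) > 0"
    using pos by (simp add: prod_pos)
  have "ln (Gamma_p p s) = ln (fact p * real p powr s) - ln (\<Prod>k = 0..p. (s + real k))"
    unfolding Gamma_p_def using prod_pos assms
    by (subst ln_div) (simp_all add: less_imp_neq[OF prod_pos, symmetric] del: prod_zero_iff)
  also have "ln (fact p * real p powr s) = ln (fact p) + s * ln (real p)"
    using assms by (subst ln_mult_pos) (auto simp: ln_powr)
  also have "ln (\<Prod>k = 0..p. (s + real k)) = (\<Sum>k=0..p. ln (s + real k))"
    using pos by (subst ln_prod) (auto, metis less_irrefl)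
  finally show ?thesis .
qed

lemma psi_p_eq:
  assumes "p \<ge> 1" "x > (0::real)"
  shows "psi_p p x = ln (real p) - (\<Sum>k=0..p. 1 / (x + real k))"
proof -
  let ?f = "\<lambda>s. ln (fact p) + s * ln (real p) - (\<Sum>k=0..p. ln (s + real k))"
  have "(?f has_field_derivative (ln (real p) - (\<Sum>k=0..p. 1 / (x + real k)))) (at x)"
    by (rule derivative_eq_intros refl | use assms in \<open>force\<close>)+
  then have "((\<lambda>s. ln (Gamma_p p s)) has_field_derivative
               (ln (real p) - (\<Sum>k=0..p. 1 / (x + real k)))) (at x)"
    by (rule has_field_derivative_transform_within_open[where S="{0<..}"])
       (use assms ln_Gamma_p in auto)
  then show ?thesis
    unfolding psi_p_def by (rule DERIV_imp_deriv)
qed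

lemma euler_mascheroni_plus_Digamma_pos:
  assumes "x > (1::real)"
  shows "euler_mascheroni + Digamma x > 0"
  using Digamma_real_strict_mono[of 1 x] assms by simp

theorem lemma3p2:
  fixes a b \<alpha> \<beta> t :: real and p :: nat
  assumes "a > 0" and "b > 0" and "p \<ge> 1" and "\<alpha> + \<beta> * t > 1"
  shows "a * euler_mascheroni + b * ln (real p) + a * Digamma (\<alpha> + \<beta> * t)
           - b * psi_p p (\<alpha> + \<beta> * t) > 0"
proof -
  define x where "x = \<alpha> + \<beta> * t"
  have x: "x > 1"
    using assms(4) by (simp add: x_def)
  have digamma_pos: "euler_mascheroni + Digamma x > 0"
    using x by (rule euler_mascheroni_plus_Digamma_pos)
  have sum_pos: "(\<Sum>k=0..p. 1 / (x + real k)) > 0"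
    by (rule sum_pos) (use x in auto)
  have "a * euler_mascheroni + b * ln (real p) + a * Digamma x - b * psi_p p x
        = a * (euler_mascheroni + Digamma x) + b * (\<Sum>k=0..p. 1 / (x + real k))"
    using x by (simp add: psi_p_eq[OF assms(3)] algebra_simps)
  also have "\<dots> > 0"
    using digamma_pos sum_pos assms(1,2) by (simp add: add_pos_pos)
  finally show ?thesis
    unfolding x_def .
qed

end
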